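(* Let $G$ be a finite simple graph of order $n$ and size $m$ whose adjacency matrix $A(G)$ is non-singular. Let $\mu_1\ge\mu_2$ be the two largest values among $|\lambda_1|,\dots,|\lambda_n|$ (counted with multiplicity), where $\lambda_1,\dots,\lambda_n$ are the eigenvalues of $A(G)$. Then \[\mathcal{E}(G)\geq \mu_1+(n-1)\left(\sqrt{\mu_2^2+2\mu_2\sqrt[n-1]{\frac{|\det A(G)|}{\mu_1}}+\frac{2m-\mu_1^2}{n-1}}-\mu_2\right).\]
   Context: For a finite simple graph $G$, $A(G)$ is its adjacency matrix with eigenvalues $\lambda_1\ge\cdots\ge\lambda_n$, and the energy is $\mathcal{E}(G)=\sum_{i=1}^n|\lambda_i|$. Note $\mu_1=\lambda_1$ and $\mu_2=\max(\lambda_2,-\lambda_n)$. $G$ is non-singular if $A(G)$ is non-singular. *)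

theory Defs
  imports "Jordan_Normal_Form.Char_Poly" "Jordan_Normal_Form.Determinant"
begin

definition simple_graph :: "nat \<Rightarrow> (nat \<Rightarrow> nat \<Rightarrow> bool) \<Rightarrow> bool" where
  "simple_graph n E \<longleftrightarrow> (\<forall>i<n. \<forall>j<n. E i j \<longleftrightarrow> E j i) \<and> (\<forall>i<n. \<not> E i i)"

definition adj_matrix :: "nat \<Rightarrow> (nat \<Rightarrow> nat \<Rightarrow> bool) \<Rightarrow> real mat" where
  "adj_matrix n E = mat n n (\<lambda>(i,j). if E i j then 1 else 0)"

definition graph_size :: "nat \<Rightarrow> (nat \<Rightarrow> nat \<Rightarrow> bool) \<Rightarrow> nat" where
  "graph_size n E = card {{i,j} | i j. i < n \<and> j < n \<and> E i j}"

definition eigenvalue_list :: "real mat \<Rightarrow> real list \<Rightarrow> bool" where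
  "eigenvalue_list A ls \<longleftrightarrow> char_poly A = (\<Prod>a\<leftarrow>ls. [:- a, 1:])"

definition energy_of :: "real list \<Rightarrow> real" where
  "energy_of ls = sum_list (map abs ls)"

definition abs_desc :: "real list \<Rightarrow> real list" where
  "abs_desc ls = rev (sort (map abs ls))"

definition mu1 :: "real list \<Rightarrow> real" where "mu1 ls = abs_desc ls ! 0"
definition mu2 :: "real list \<Rightarrow> real" where "mu2 ls = abs_desc ls ! 1"

end

theory Submission
  imports Defs "Jordan_Normal_Form.Schur_Decomposition"
begin

text \<open>Let \<open>x\<^sub>1, \<dots>, x\<^sub>k\<close> (\<open>k = n - 1\<close>) be the absolute eigenvalues other than \<open>\<mu>\<^sub>1\<close>.
  They are positive because \<open>A\<close> is non-singular, bounded by \<open>\<mu>\<^sub>2\<close>, their product is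
  \<open>|det A| / \<mu>\<^sub>1\<close> and their squares sum to \<open>tr A\<^sup>2 - \<mu>\<^sub>1\<^sup>2 = 2m - \<mu>\<^sub>1\<^sup>2\<close>. For their
  geometric mean \<open>g\<close>, the pointwise estimate \<open>(x - g)\<^sup>2 \<le> 2 \<mu>\<^sub>2 (x - g - g ln (x/g))\<close>
  summed over the \<open>x\<^sub>i\<close>, where the logarithms cancel, gives
  \<open>\<Sum> x\<^sub>i\<^sup>2 - (\<Sum> x\<^sub>i)\<^sup>2/k \<le> 2 \<mu>\<^sub>2 (\<Sum> x\<^sub>i - k g)\<close>, i.e.
  \<open>\<mu>\<^sub>2\<^sup>2 + 2 \<mu>\<^sub>2 g + \<Sum> x\<^sub>i\<^sup>2/k \<le> (\<Sum> x\<^sub>i/k + \<mu>\<^sub>2)\<^sup>2\<close>; taking square roots bounds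
  \<open>\<Sum> x\<^sub>i = \<E> - \<mu>\<^sub>1\<close> from below.\<close>

lemma ln_le_half_sub_inverse:
  fixes t :: real
  assumes "1 \<le> t"
  shows "ln t \<le> (t - 1/t) / 2"
proof -
  let ?f = "\<lambda>t::real. (t - 1/t) / 2 - ln t"
  have "?f 1 \<le> ?f t"
  proof (rule DERIV_nonneg_imp_increasing_open[OF assms])
    fix x :: real
    assume x: "1 < x" "x < t"
    have "DERIV ?f x :> (1 + 1/x^2) / 2 - 1/x"
      using x by (auto intro!: derivative_eq_intros simp: field_simps power2_eq_square)
    moreover have "(1 + 1/x^2) / 2 - 1/x = (1 - 1/x)^2 / 2"
      using x by (simp add: field_simps power2_eq_square)
    ultimately show "\<exists>y. DERIV ?f x :> y \<and> 0 \<le> y"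
      by auto
  qed (auto intro!: continuous_intros)
  then show ?thesis by simp
qed

lemma ln_le_sub_one_sub_half_square:
  fixes t :: real
  assumes "0 < t" "t \<le> 1"
  shows "ln t \<le> t - 1 - (t - 1)^2 / 2"
proof -
  let ?f = "\<lambda>t::real. t - 1 - (t - 1)^2 / 2 - ln t"
  have "?f 1 \<le> ?f t"
  proof (rule DERIV_nonpos_imp_decreasing_open[OF assms(2)])
    fix x :: real
    assume x: "t < x" "x < 1"
    have "DERIV ?f x :> 1 - (x - 1) - 1/x"
      using x assms by (auto intro!: derivative_eq_intros simp: field_simps power2_eq_square)
    moreover have "1 - (x - 1) - 1/x = - ((x - 1)^2 / x)"
      using x assms by (simp add: field_simps power2_eq_square)
    moreover have "0 \<le> (x - 1)^2 / x"
      using x assms by simp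
    ultimately show "\<exists>y. DERIV ?f x :> y \<and> y \<le> 0"
      by (metis neg_le_0_iff_le)
  qed (use assms in \<open>auto intro!: continuous_intros\<close>)
  then show ?thesis by simp
qed

lemma square_diff_le_log_defect:
  fixes x a M :: real
  assumes "0 < x" "0 < a" "x \<le> M" "a \<le> M"
  shows "(x - a)^2 \<le> 2 * M * (x - a - a * ln (x / a))"
proof -
  have defect: "(x - a)^2 / (2 * max x a) \<le> x - a - a * ln (x / a)"
  proof (cases "a \<le> x")
    case True
    have "a * ln (x / a) \<le> a * ((x / a - 1 / (x / a)) / 2)"
      using True assms by (intro mult_left_mono ln_le_half_sub_inverse) auto
    also have "\<dots> = x - a - (x - a)^2 / (2 * x)"
      using assms by (simp add: field_simps power2_eq_square)
    finally show ?thesis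
      using True by (simp add: max_def)
  next
    case False
    have "a * ln (x / a) \<le> a * (x / a - 1 - (x / a - 1)^2 / 2)"
      using False assms by (intro mult_left_mono ln_le_sub_one_sub_half_square) auto
    also have "\<dots> = x - a - (x - a)^2 / (2 * a)"
      using assms by (simp add: field_simps power2_eq_square)
    finally show ?thesis
      using False by (simp add: max_def)
  qed
  have "(x - a)^2 / (2 * M) \<le> (x - a)^2 / (2 * max x a)"
    using assms by (intro divide_left_mono) auto
  with defect have "(x - a)^2 / (2 * M) \<le> x - a - a * ln (x / a)"
    by linarith
  then show ?thesis
    using assms by (simp add: field_simps)
qed

lemma prod_list_pos:
  fixes xs :: "'a::linordered_semidom list"
  assumes "\<forall>x\<in>set xs. 0 < x"
  shows "0 < prod_list xs"
  using assms by (induction xs) auto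

lemma ln_prod_list:
  fixes xs :: "real list"
  assumes "\<forall>x\<in>set xs. 0 < x"
  shows "ln (prod_list xs) = (\<Sum>x\<leftarrow>xs. ln x)"
  using assms by (induction xs) (auto simp: ln_mult prod_list_pos)

lemma prod_list_le_power_length:
  fixes xs :: "'a::linordered_semidom list"
  assumes "\<forall>x\<in>set xs. 0 \<le> x \<and> x \<le> M"
  shows "prod_list xs \<le> M ^ length xs"
  using assms by (induction xs) (auto intro!: mult_mono prod_list_nonneg)

lemma sum_square_dev_le_am_gm_gap:
  fixes xs :: "real list"
  assumes "xs \<noteq> []" and bounds: "\<forall>x\<in>set xs. 0 < x \<and> x \<le> M"
  defines "k \<equiv> length xs" and "S \<equiv> sum_list xs" and "g \<equiv> root (length xs) (prod_list xs)"
  shows "(\<Sum>x\<leftarrow>xs. x^2) - S^2 / k \<le> 2 * M * (S - k * g)"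
proof -
  have k: "0 < k"
    using assms(1) by (simp add: k_def)
  have prod_pos: "0 < prod_list xs" and ln_prod: "ln (prod_list xs) = (\<Sum>x\<leftarrow>xs. ln x)"
    using prod_list_pos ln_prod_list bounds by auto
  have g_pos: "0 < g" and g_pow: "g ^ k = prod_list xs"
    using prod_pos k by (simp_all add: g_def k_def)
  have M: "0 \<le> M"
    using bounds assms(1) by (metis last_in_set order.strict_iff_not order_less_le_trans)
  have "g ^ k \<le> M ^ k"
    using g_pow bounds prod_list_le_power_length[of xs M] by (simp add: k_def less_imp_le)
  then have g_le: "g \<le> M"
    using k M g_pos by simp
  have "(\<Sum>x\<leftarrow>xs. ln (x / g)) = (\<Sum>x\<leftarrow>xs. ln x - ln g)"
    using bounds g_pos by (intro arg_cong[of _ _ sum_list] map_cong) (auto simp: ln_div)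
  also have "\<dots> = ln (prod_list xs) - k * ln g"
    by (simp add: sum_list_subtractf sum_list_triv ln_prod k_def)
  finally have logs_cancel: "(\<Sum>x\<leftarrow>xs. ln (x / g)) = 0"
    using g_pos by (simp add: ln_realpow flip: g_pow)
  have "(\<Sum>x\<leftarrow>xs. (x - g)^2) \<le> (\<Sum>x\<leftarrow>xs. 2 * M * (x - g - g * ln (x / g)))"
    using bounds g_pos g_le by (intro sum_list_mono square_diff_le_log_defect) auto
  also have "\<dots> = 2 * M * (S - k * g - g * (\<Sum>x\<leftarrow>xs. ln (x / g)))"
    by (simp add: S_def k_def sum_list_const_mult sum_list_subtractf sum_list_triv)
  finally have "(\<Sum>x\<leftarrow>xs. (x - g)^2) \<le> 2 * M * (S - k * g)"
    by (simp add: logs_cancel)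
  moreover have "(\<Sum>x\<leftarrow>xs. (x - g)^2) = (\<Sum>x\<leftarrow>xs. x^2) - 2 * g * S + k * g^2"
    by (simp add: S_def k_def power2_diff sum_list_addf sum_list_subtractf sum_list_const_mult
        sum_list_mult_const sum_list_triv algebra_simps)
  moreover have "0 \<le> k * g^2 - 2 * g * S + S^2 / k"
  proof -
    have "k * g^2 - 2 * g * S + S^2 / k = (k * g - S)^2 / k"
      using k by (simp add: field_simps power2_eq_square)
    then show ?thesis by simp
  qed
  ultimately show ?thesis
    by linarith
qed

definition mat_trace :: "'a::comm_ring_1 mat \<Rightarrow> 'a" where
  "mat_trace A = (\<Sum>i<dim_row A. A $$ (i, i))"

lemma index_mult_mat_sum:
  assumes "A \<in> carrier_mat n m" "B \<in> carrier_mat m l" "i < n" "j < l"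
  shows "(A * B) $$ (i, j) = (\<Sum>k<m. A $$ (i, k) * B $$ (k, j))"
  using assms by (auto simp: scalar_prod_def lessThan_atLeast0 intro!: sum.cong)

lemma mat_trace_mult_comm:
  assumes "A \<in> carrier_mat n m" "B \<in> carrier_mat m n"
  shows "mat_trace (A * B) = mat_trace (B * A)"
proof -
  have "mat_trace (A * B) = (\<Sum>i<n. \<Sum>k<m. A $$ (i, k) * B $$ (k, i))"
    using assms by (simp add: mat_trace_def index_mult_mat_sum del: index_mult_mat(1))
  also have "\<dots> = (\<Sum>k<m. \<Sum>i<n. B $$ (k, i) * A $$ (i, k))"
    by (subst sum.swap) (simp add: mult.commute)
  also have "\<dots> = mat_trace (B * A)"
    using assms by (simp add: mat_trace_def index_mult_mat_sum del: index_mult_mat(1))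
  finally show ?thesis .
qed

lemma mat_trace_similar:
  assumes "similar_mat A B"
  shows "mat_trace A = mat_trace B"
proof -
  obtain n P Q where carrier: "{A, B, P, Q} \<subseteq> carrier_mat n n"
    and QP: "Q * P = 1\<^sub>m n" and AB: "A = P * B * Q"
    using similar_matD[OF assms] by blast
  have "mat_trace A = mat_trace (Q * (P * B))"
    unfolding AB using carrier by (intro mat_trace_mult_comm) auto
  also have "Q * (P * B) = B"
    using carrier QP
    by (simp add: assoc_mult_mat[symmetric, of Q n n P n B n] left_mult_one_mat[of B n n])
  finally show ?thesis .
qed

lemma similar_mat_pow:
  assumes "similar_mat A B"
  shows "similar_mat (A ^\<^sub>m k) (B ^\<^sub>m k)"
  using assms similar_mat_wit_pow unfolding similar_mat_def by blast

lemma upper_triangular_mult_diag: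
  assumes "A \<in> carrier_mat n n" "B \<in> carrier_mat n n"
    and "upper_triangular A" "upper_triangular B" and "i < n"
  shows "(A * B) $$ (i, i) = A $$ (i, i) * B $$ (i, i)"
proof -
  have "(A * B) $$ (i, i) = (\<Sum>k<n. A $$ (i, k) * B $$ (k, i))"
    using assms by (simp add: index_mult_mat_sum del: index_mult_mat(1))
  also have "\<dots> = (\<Sum>k\<in>{i}. A $$ (i, k) * B $$ (k, i))"
  proof (rule sum.mono_neutral_right)
    show "\<forall>k\<in>{..<n} - {i}. A $$ (i, k) * B $$ (k, i) = 0"
    proof
      fix k
      assume "k \<in> {..<n} - {i}"
      then show "A $$ (i, k) * B $$ (k, i) = 0"
        using assms by (cases "k < i") (auto simp: upper_triangular_def)
    qed
  qed (use assms in auto)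
  finally show ?thesis by simp
qed

lemma schur_upper_triangular_diag:
  fixes A :: "'a::conjugatable_ordered_field mat"
  assumes "A \<in> carrier_mat n n" "char_poly A = (\<Prod>a\<leftarrow>ls. [:- a, 1:])"
  obtains B where "B \<in> carrier_mat n n" "upper_triangular B" "similar_mat A B" "diag_mat B = ls"
proof -
  obtain B P Q where "schur_decomposition A ls = (B, P, Q)"
    by (metis prod_cases3)
  from schur_decomposition[OF assms this]
  have "similar_mat_wit A B P Q" "upper_triangular B" "diag_mat B = ls"
    by auto
  with similar_mat_witD2[OF assms(1)] show ?thesis
    by (intro that) (auto simp: similar_mat_def)
qed

lemma
  fixes A :: "'a::conjugatable_ordered_field mat"
  assumes "A \<in> carrier_mat n n" "char_poly A = (\<Prod>a\<leftarrow>ls. [:- a, 1:])"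
  shows length_eigenvalue_list: "length ls = n"
    and det_eq_prod_eigenvalues: "det A = prod_list ls"
    and mat_trace_square_eq_sum_square_eigenvalues: "mat_trace (A * A) = (\<Sum>a\<leftarrow>ls. a^2)"
proof -
  obtain B where B: "B \<in> carrier_mat n n" "upper_triangular B" "similar_mat A B" "diag_mat B = ls"
    using schur_upper_triangular_diag[OF assms] .
  have ls_nth: "ls = map (\<lambda>i. B $$ (i, i)) [0..<n]"
    using B by (simp add: diag_mat_def)
  show "length ls = n"
    by (simp add: ls_nth)
  show "det A = prod_list ls"
    using B det_similar det_upper_triangular by metis
  have "A ^\<^sub>m 2 = A * A" "B ^\<^sub>m 2 = B * B"
    using assms(1) B(1) by (simp_all add: numeral_2_eq_2)
  then have "mat_trace (A * A) = mat_trace (B * B)"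
    using B(3) by (metis mat_trace_similar similar_mat_pow)
  also have "\<dots> = (\<Sum>i<n. (B $$ (i, i))^2)"
    using B
    by (simp add: mat_trace_def upper_triangular_mult_diag power2_eq_square del: index_mult_mat(1))
  also have "\<dots> = (\<Sum>a\<leftarrow>ls. a^2)"
    by (simp add: ls_nth lessThan_atLeast0 comp_def sum_list_distinct_conv_sum_set)
  finally show "mat_trace (A * A) = (\<Sum>a\<leftarrow>ls. a^2)" .
qed

lemma sum_list_ge_geometric_sqrt_bound:
  fixes xs :: "real list"
  assumes bounds: "\<forall>x\<in>set xs. 0 < x \<and> x \<le> M"
  defines "k \<equiv> length xs"
  shows "k * (sqrt (M^2 + 2 * M * root k (prod_list xs) + (\<Sum>x\<leftarrow>xs. x^2) / k) - M) \<le> sum_list xs"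
proof (cases "xs = []")
  case True
  then show ?thesis by (simp add: k_def)
next
  case False
  define S where "S = sum_list xs"
  define g where "g = root k (prod_list xs)"
  have k: "0 < real k"
    using False by (simp add: k_def)
  have M: "0 \<le> M" and S: "0 \<le> S"
    using bounds False unfolding S_def
    by (auto intro: sum_list_nonneg less_imp_le) (metis last_in_set less_le_trans less_imp_le)
  have "(\<Sum>x\<leftarrow>xs. x^2) - S^2 / k \<le> 2 * M * (S - k * g)"
    using sum_square_dev_le_am_gm_gap[OF False bounds] by (simp add: S_def g_def k_def)
  moreover have "(S / k + M)^2 - (M^2 + 2 * M * g + (\<Sum>x\<leftarrow>xs. x^2) / k)
      = (2 * M * (S - k * g) - ((\<Sum>x\<leftarrow>xs. x^2) - S^2 / k)) / k"
    using k by (simp add: field_simps power2_eq_square)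
  ultimately have "M^2 + 2 * M * g + (\<Sum>x\<leftarrow>xs. x^2) / k \<le> (S / k + M)^2"
    using k by (smt (verit) divide_nonneg_pos)
  then have "sqrt (M^2 + 2 * M * g + (\<Sum>x\<leftarrow>xs. x^2) / k) \<le> S / k + M"
    using k M S by (intro real_le_lsqrt) auto
  then show ?thesis
    using k by (simp add: S_def g_def field_simps)
qed

lemma adj_matrix_carrier: "adj_matrix n E \<in> carrier_mat n n"
  by (simp add: adj_matrix_def)

lemma card_arcs_eq_twice_graph_size:
  assumes "simple_graph n E"
  shows "card {(i, j). i < n \<and> j < n \<and> E i j} = 2 * graph_size n E"
proof -
  let ?arcs = "{(i, j). i < n \<and> j < n \<and> E i j}"
  let ?up = "{(i, j). i < n \<and> j < n \<and> E i j \<and> i < j}"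
  have sym: "\<And>i j. i < n \<Longrightarrow> j < n \<Longrightarrow> E i j = E j i"
    and irrefl: "\<And>i. i < n \<Longrightarrow> \<not> E i i"
    using assms unfolding simple_graph_def by auto
  have fin: "finite ?up"
    by (rule finite_subset[of _ "{..<n} \<times> {..<n}"]) auto
  have arcs: "?arcs = ?up \<union> prod.swap ` ?up"
    using sym irrefl by (auto simp: image_iff) (metis linorder_neqE_nat)
  have "card ?arcs = card ?up + card (prod.swap ` ?up)"
    unfolding arcs using fin by (intro card_Un_disjoint) auto
  also have "card (prod.swap ` ?up) = card ?up"
    by (simp add: card_image)
  also have "card ?up = graph_size n E"
  proof -
    have "{{i, j} | i j. i < n \<and> j < n \<and> E i j} = (\<lambda>(i, j). {i, j}) ` ?up"
      using sym irrefl by (auto simp: image_iff) (metis insert_commute linorder_neqE_nat)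
    moreover have "inj_on (\<lambda>(i, j). {i, j}) ?up"
      by (auto simp: inj_on_def doubleton_eq_iff)
    ultimately show ?thesis
      unfolding graph_size_def by (simp add: card_image)
  qed
  finally show ?thesis by simp
qed

lemma mat_trace_adj_matrix_square:
  assumes "simple_graph n E"
  shows "mat_trace (adj_matrix n E * adj_matrix n E) = 2 * real (graph_size n E)"
proof -
  have sym: "\<And>i j. i < n \<Longrightarrow> j < n \<Longrightarrow> E i j = E j i"
    using assms unfolding simple_graph_def by auto
  have "mat_trace (adj_matrix n E * adj_matrix n E)
      = (\<Sum>i<n. \<Sum>j<n. adj_matrix n E $$ (i, j) * adj_matrix n E $$ (j, i))"
    by (simp add: mat_trace_def index_mult_mat_sum[OF adj_matrix_carrier adj_matrix_carrier]
        adj_matrix_carrier[THEN carrier_matD(1)] del: index_mult_mat(1))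
  also have "\<dots> = (\<Sum>i<n. \<Sum>j<n. if E i j then 1 else 0)"
    by (intro sum.cong refl) (auto simp: adj_matrix_def sym)
  also have "\<dots> = (\<Sum>i<n. real (card {j. j < n \<and> E i j}))"
    by (simp add: sum.If_cases Int_def)
  also have "\<dots> = real (card (SIGMA i:{..<n}. {j. j < n \<and> E i j}))"
    by (simp add: card_SigmaI)
  also have "(SIGMA i:{..<n}. {j. j < n \<and> E i j}) = {(i, j). i < n \<and> j < n \<and> E i j}"
    by auto
  finally show ?thesis
    using card_arcs_eq_twice_graph_size[OF assms] by simp
qed

lemma mset_abs_desc: "mset (abs_desc ls) = mset (map abs ls)"
  by (simp add: abs_desc_def)

lemma sorted_abs_desc: "sorted_wrt (\<ge>) (abs_desc ls)"
  by (simp add: abs_desc_def sorted_wrt_rev)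

lemma set_abs_desc: "set (abs_desc ls) = abs ` set ls"
  by (simp add: abs_desc_def)

lemma sum_list_map_abs_desc:
  fixes f :: "real \<Rightarrow> 'a::comm_monoid_add"
  shows "(\<Sum>x\<leftarrow>abs_desc ls. f x) = (\<Sum>x\<leftarrow>ls. f \<bar>x\<bar>)"
proof -
  have "mset (map f (abs_desc ls)) = mset (map (\<lambda>x. f \<bar>x\<bar>) ls)"
    by (simp only: mset_map mset_abs_desc multiset.map_comp comp_def)
  then show ?thesis
    by (metis sum_mset_sum_list)
qed

lemma prod_list_abs_desc: "prod_list (abs_desc ls) = \<bar>prod_list ls\<bar>"
proof -
  have "prod_list (abs_desc ls) = prod_list (map abs ls)"
    unfolding prod_mset_prod_list[symmetric] by (simp add: mset_abs_desc)
  also have "\<dots> = \<bar>prod_list ls\<bar>"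
    by (induction ls) (simp_all add: abs_mult)
  finally show ?thesis .
qed

theorem theorem3p2:
  fixes n :: nat and E :: "nat \<Rightarrow> nat \<Rightarrow> bool" and ls :: "real list"
  assumes "simple_graph n E"
    and "n \<ge> 1"
    and "det (adj_matrix n E) \<noteq> 0"
    and "eigenvalue_list (adj_matrix n E) ls"
  shows "energy_of ls \<ge> mu1 ls + real (n - 1) *
      (sqrt ((mu2 ls)^2 + 2 * mu2 ls * root (n - 1) (\<bar>det (adj_matrix n E)\<bar> / mu1 ls)
             + (2 * real (graph_size n E) - (mu1 ls)^2) / real (n - 1)) - mu2 ls)"
proof -
  note spectrum = adj_matrix_carrier assms(4)[unfolded eigenvalue_list_def]
  have "length (abs_desc ls) = n"
    using length_eigenvalue_list[OF spectrum] by (simp add: abs_desc_def)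
  then obtain ys where desc: "abs_desc ls = mu1 ls # ys" and len: "length ys = n - 1"
    using assms(2) by (cases "abs_desc ls") (auto simp: mu1_def)
  have "0 \<notin> set ls"
    using assms(3) by (simp add: det_eq_prod_eigenvalues[OF spectrum] prod_list_zero_iff)
  then have "\<forall>x\<in>set (abs_desc ls). 0 < x"
    by (auto simp: set_abs_desc)
  then have pos: "0 < mu1 ls" "\<forall>y\<in>set ys. 0 < y"
    by (simp_all add: desc)
  moreover have "\<forall>y\<in>set ys. y \<le> mu2 ls"
    using sorted_abs_desc[of ls] by (cases ys) (auto simp: desc mu2_def)
  ultimately have bounds: "\<forall>y\<in>set ys. 0 < y \<and> y \<le> mu2 ls"
    by simp
  have energy: "energy_of ls = mu1 ls + sum_list ys"
    using sum_list_map_abs_desc[of id ls] by (simp add: energy_of_def desc)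
  have det_ratio: "\<bar>det (adj_matrix n E)\<bar> / mu1 ls = prod_list ys"
  proof -
    have "\<bar>det (adj_matrix n E)\<bar> = mu1 ls * prod_list ys"
      using prod_list_abs_desc[of ls] det_eq_prod_eigenvalues[OF spectrum] by (simp add: desc)
    then show ?thesis
      using pos(1) by simp
  qed
  have squares: "2 * real (graph_size n E) - (mu1 ls)^2 = (\<Sum>y\<leftarrow>ys. y^2)"
    using sum_list_map_abs_desc[of "\<lambda>x. x^2" ls] mat_trace_adj_matrix_square[OF assms(1)]
      mat_trace_square_eq_sum_square_eigenvalues[OF spectrum] by (simp add: desc)
  show ?thesis
    using sum_list_ge_geometric_sqrt_bound[OF bounds]
    unfolding energy det_ratio squares len by linarith
qed

end
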